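(* For every admissible $(\alpha,s)$, the measure $\mu^{\alpha}_{s,2}$ is a free compound Poisson distribution: there exist $\eta,M>0$ such that $R_{\mu^\alpha_{s,2}}(1/z)\cdot$ — equivalently, $\phi_{\mu^{\alpha}_{s,2}}(z)=z^2G_{a^{\alpha}_{s/4}}(z)-z$ for $z\in\Gamma_{\eta,M}$, i.e. $R_{\mu^\alpha_{s,2}}=\psi_{a^\alpha_{s/4}}$ — with rate $\lambda=1$ and jump distribution $a^{\alpha}_{s/4}$. In particular $\mu^{\alpha}_{s,2}$ is $\boxplus$-infinitely divisible and its free Lévy measure is the monotone $\alpha$-stable law $a^{\alpha}_{s/4}$.
   Context: Powers: for $w\in\mathbb{C}\setminus[0,\infty)$ and $p\in\{\alpha,1/\alpha\}$, $w^p:=e^{p\log_{(1)}w}$ with $\operatorname{Im}\log_{(1)}w\in(0,2\pi)$; $w^{1/r}$ is the principal power on $\mathbb{C}\setminus(-\infty,0]$; $(-1)^{\alpha-1}:=e^{i(\alpha-1)\pi}$. A pair $(\alpha,s)$ ($0<\alpha\le2$, $\arg s\in(-\pi,\pi]$) is admissible if either $0<\alpha\le1$ and $(1-\alpha)\pi\le\arg s\le\pi$, or $1<\alpha\le2$ and $0\le\arg s\le(2-\alpha)\pi$. For $r\ge1$ and admissible $(\alpha,s)$, $\mu^\alpha_{s,r}$ is the probability measure with Cauchy transform $G^{\alpha}_{s,r}(z)=-r^{1/\alpha}\big(\frac{1-(1-s(-1/z)^{\alpha})^{1/r}}{s}\big)^{1/\alpha}$ on $\mathbb{C}_+$. The monotone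 $\alpha$-stable law $a^\alpha_s$ is the probability measure with $F_{a^\alpha_s}(z)=(z^\alpha+(-1)^{\alpha-1}s)^{1/\alpha}$. For a probability measure $\mu$: $G_\mu(z)=\int\frac{\mu(dx)}{z-x}$, $F_\mu=1/G_\mu$, Voiculescu transform $\phi_\mu(z)=F_\mu^{-1}(z)-z$ on a truncated cone $\Gamma_{\eta,M}=\{\operatorname{Im}z>M,\operatorname{Im}z>\eta|\operatorname{Re}z|\}$, $R_\mu(z)=z\phi_\mu(1/z)$, $\psi_\mu(z)=\int\frac{zx}{1-zx}\mu(dx)$. $\mu$ is $\boxplus$-infinitely divisible iff $R_\mu(z)=cz+az^2+\int_{\mathbb{R}}\big(\frac{1}{1-xz}-1-xz\mathbf 1_{\{|x|\le1\}}\big)\nu(dx)$ with $c\in\mathbb{R}$, $a\ge0$, $\nu$ a measure with $\nu(\{0\})=0$, $\int\min(1,x^2)\nu(dx)<\infty$; $\nu$ is the (free) Lévy measure. $\mu$ is free compound Poisson if $R_\mu=\lambda\psi_\nu$ for some $\lambda\ge0$ and probability measure $\nu$; then $\lambda\nu$ is its Lévy measure (away from $0$). *)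

theory Defs
  imports "HOL-Probability.Probability"
begin

(* log_(1): branch of the logarithm on C \ [0,oo) with imaginary part in (0, 2 pi) *)
definition log1 :: "complex \<Rightarrow> complex" where
  "log1 w = (if Im w < 0 then Ln w + 2 * pi * \<i> else Ln w)"

definition pow1 :: "complex \<Rightarrow> real \<Rightarrow> complex" where
  "pow1 w p = exp (complex_of_real p * log1 w)"

definition ppow :: "complex \<Rightarrow> real \<Rightarrow> complex" where
  "ppow w p = exp (complex_of_real p * Ln w)"

definition admissible :: "real \<Rightarrow> complex \<Rightarrow> bool" where
  "admissible \<alpha> s \<longleftrightarrow> s \<noteq> 0 \<and>
     ((0 < \<alpha> \<and> \<alpha> \<le> 1 \<and> (1 - \<alpha>) * pi \<le> Arg s \<and> Arg s \<le> pi) \<or>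
      (1 < \<alpha> \<and> \<alpha> \<le> 2 \<and> 0 \<le> Arg s \<and> Arg s \<le> (2 - \<alpha>) * pi))"

definition cauchy :: "real measure \<Rightarrow> complex \<Rightarrow> complex" where
  "cauchy \<mu> z = (\<integral>x. 1 / (z - complex_of_real x) \<partial>\<mu>)"

definition Ftr :: "real measure \<Rightarrow> complex \<Rightarrow> complex" where
  "Ftr \<mu> z = 1 / cauchy \<mu> z"

definition Gasr :: "real \<Rightarrow> complex \<Rightarrow> real \<Rightarrow> complex \<Rightarrow> complex" where
  "Gasr \<alpha> s r z = - complex_of_real (r powr (1 / \<alpha>)) *
      pow1 ((1 - ppow (1 - s * pow1 (- 1 / z) \<alpha>) (1 / r)) / s) (1 / \<alpha>)"

definition Fstable :: "real \<Rightarrow> complex \<Rightarrow> complex \<Rightarrow> complex" where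
  "Fstable \<alpha> s z = pow1 (pow1 z \<alpha> + exp (\<i> * complex_of_real ((\<alpha> - 1) * pi)) * s) (1 / \<alpha>)"

definition cone :: "real \<Rightarrow> real \<Rightarrow> complex set" where
  "cone \<eta> M = {z. Im z > M \<and> Im z > \<eta> * \<bar>Re z\<bar>}"

end

theory Submission
  imports Defs "HOL-Complex_Analysis.Weierstrass_Factorization"
begin

(* Write q(z) = (-1/z)^alpha = exp(alpha (i pi - Ln z)) (the constant mpow below).  The whole
   computation rests on one algebraic identity: if w = z^2 / F_a(z), then
   (-1/w)^alpha = q (1 - s q / 4), hence 1 - s (-1/w)^alpha = (1 - s q / 2)^2, and the square
   root, the division by s and the power 1/alpha in G^alpha_{s,2} unwind to G_mu(w) = 1/z.
   The analytic work consists of tracking branches of log_(1) and of the principal root,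
   which is possible because for |z| large all perturbations are small. *)

lemma log1_exp:
  assumes "0 \<le> Im L" "Im L < 2 * pi"
  shows "log1 (exp L) = L"
proof (cases "Im L \<le> pi")
  case True
  have "Im (exp L) \<ge> 0"
    using sin_ge_zero[OF assms(1) True] by (simp add: Im_exp)
  then show ?thesis
    using assms True by (simp add: log1_def)
next
  case False
  have "Im (exp L) < 0"
    using sin_lt_zero[of "Im L"] False assms(2) by (simp add: Im_exp mult_pos_neg)
  moreover have "Ln (exp L) = L - 2 * pi * \<i>"
  proof -
    have "exp L = exp (L - 2 * pi * \<i>)" by (simp add: exp_diff)
    also have "Ln \<dots> = L - 2 * pi * \<i>" using False assms(2) by (intro Ln_exp) auto
    finally show ?thesis .
  qed
  ultimately show ?thesis by (simp add: log1_def)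
qed

lemma pow1_exp:
  assumes "0 \<le> Im L" "Im L < 2 * pi"
  shows "pow1 (exp L) p = exp (of_real p * L)"
  using log1_exp[OF assms] by (simp add: pow1_def)

lemma exp_eq_imp_eq:
  assumes "exp a = exp b" "\<bar>Im a - Im b\<bar> < 2 * pi"
  shows "a = b"
proof -
  obtain n :: int where n: "a = b + of_real (of_int (2 * n) * pi) * \<i>"
    using assms(1) unfolding exp_eq by auto
  then have "\<bar>of_int n\<bar> * (2 * pi) < 1 * (2 * pi)"
    using assms(2) by (simp add: abs_mult)
  then have "n = 0" by (subst (asm) mult_less_cancel_right) auto
  then show ?thesis using n by simp
qed

lemma exp_Ln_one_plus:
  fixes e :: complex
  assumes "norm e < 1/2"
  shows "exp (Ln (1 + e)) = 1 + e"
proof -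
  have "1 + e \<noteq> 0"
  proof
    assume "1 + e = 0"
    then have "e = -1" by (simp add: add_eq_0_iff)
    then show False using assms by simp
  qed
  then show ?thesis by simp
qed

lemma log1_exp_mult:
  assumes e: "norm e < 1/2" and lo: "2 * norm e \<le> Im L" and hi: "Im L + 2 * norm e < 2 * pi"
  shows "log1 (exp L * (1 + e)) = L + Ln (1 + e)"
proof -
  have "\<bar>Im (Ln (1 + e))\<bar> \<le> 2 * norm e"
    using abs_Im_le_cmod norm_Ln_le[OF e] by (rule order_trans)
  then have "0 \<le> Im (L + Ln (1 + e))" "Im (L + Ln (1 + e)) < 2 * pi"
    using lo hi by auto
  from log1_exp[OF this] show ?thesis
    by (simp add: exp_add exp_Ln_one_plus[OF e])
qed

lemma log1_exp_mult_sector: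
  assumes "0 < \<alpha>" "\<alpha> \<le> 2" "pi / 4 < \<theta>" "\<theta> < 3 * pi / 4"
    and "Im L = \<alpha> * \<theta>" "norm e \<le> \<alpha> / 80"
  shows "log1 (exp L * (1 + e)) = L + Ln (1 + e)"
proof (rule log1_exp_mult)
  have "\<alpha> * (pi / 4) < \<alpha> * \<theta>" "\<alpha> * \<theta> < \<alpha> * (3 * pi / 4)"
    using assms by simp_all
  moreover have "\<alpha> * (3 * pi / 4) \<le> 2 * (3 * pi / 4)" "\<alpha> * (1 / 40) \<le> \<alpha> * (pi / 4)"
    using assms pi_gt3 by (intro mult_right_mono mult_left_mono; simp)+
  ultimately show "norm e < 1/2" "2 * norm e \<le> Im L" "Im L + 2 * norm e < 2 * pi"
    using assms pi_gt3 by linarith+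
qed

lemma Ln_mult_exp:
  assumes "z \<noteq> 0" "- pi < Im (Ln z) + Im d" "Im (Ln z) + Im d \<le> pi"
  shows "Ln (z * exp d) = Ln z + d"
proof -
  have "z * exp d = exp (Ln z + d)" using assms(1) by (simp add: exp_add)
  also have "Ln \<dots> = Ln z + d" using assms(2,3) by (intro Ln_exp) auto
  finally show ?thesis .
qed

lemma ppow_half:
  assumes "y \<noteq> 0"
  shows "ppow y (1/2) ^ 2 = y" "Re (ppow y (1/2)) \<ge> 0"
proof -
  have "ppow y (1/2) ^ 2 = exp (of_nat 2 * (Ln y / 2))"
    unfolding exp_of_nat_mult by (simp add: ppow_def)
  also have "\<dots> = y" using assms by simp
  finally show "ppow y (1/2) ^ 2 = y" .
  have "- pi < Im (Ln y)" "Im (Ln y) \<le> pi"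
    using assms mpi_less_Im_Ln Im_Ln_le_pi by auto
  then have "cos (Im (Ln y) / 2) \<ge> 0" by (intro cos_ge_zero) auto
  then show "Re (ppow y (1/2)) \<ge> 0" by (simp add: ppow_def Re_exp)
qed

lemma ppow_half_square:
  assumes "Re r > 0"
  shows "ppow (r ^ 2) (1/2) = r"
proof -
  define R where "R = ppow (r ^ 2) (1/2)"
  have "r \<noteq> 0" using assms by auto
  then have "R ^ 2 = r ^ 2" "Re R \<ge> 0" using ppow_half[of "r ^ 2"] by (simp_all add: R_def)
  then have "(R - r) * (R + r) = 0" "Re (R + r) > 0"
    using assms by (simp_all add: algebra_simps power2_eq_square)
  then have "R - r = 0" by (metis mult_eq_0_iff zero_complex.sel(1) less_irrefl)
  then show ?thesis by (simp add: R_def)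
qed

lemma Im_Ln_quarter_cone:
  assumes "Im w > \<bar>Re w\<bar>"
  shows "pi / 4 < Im (Ln w)" "Im (Ln w) < 3 * pi / 4"
proof -
  define t where "t = Im (Ln w)"
  have w0: "w \<noteq> 0" using assms by auto
  have t: "0 < t" "t < pi" using Im_Ln_pos_lt_imp[of w] assms by (auto simp: t_def)
  have "exp (Re (Ln w)) = norm w" using w0 by simp
  then have "Re w = norm w * cos t" "Im w = norm w * sin t"
    using arg_cong[OF exp_Ln[OF w0], of Re] arg_cong[OF exp_Ln[OF w0], of Im]
    by (simp_all add: Re_exp Im_exp t_def)
  then have sc: "\<bar>cos t\<bar> < sin t"
    using assms w0 by (simp add: abs_mult)
  show "pi / 4 < t"
  proof (rule ccontr)
    assume "\<not> pi / 4 < t"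
    then have "sin t \<le> sin (pi / 4)" "cos (pi / 4) \<le> cos t"
      using t by (auto intro!: sin_monotone_2pi_le cos_monotone_0_pi_le)
    then show False using sc unfolding sin_45 cos_45 by linarith
  qed
  show "t < 3 * pi / 4"
  proof (rule ccontr)
    assume "\<not> t < 3 * pi / 4"
    then have "sin (pi - t) \<le> sin (pi / 4)"
      by (intro sin_monotone_2pi_le; use t in linarith)
    moreover have "cos t \<le> cos (pi - pi / 4)"
      using \<open>\<not> t < 3 * pi / 4\<close> by (intro cos_monotone_0_pi_le; use t in linarith)
    ultimately show False using sc unfolding sin_45 cos_pi_minus cos_45 sin_pi_minus by linarith
  qed
qed

(* mpow alpha z = (-1/z)^alpha, written with the principal logarithm of z; it is the
   variable in which both G^alpha_{s,2} and F_{a^alpha_s} become algebraic. *)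
definition mpow :: "real \<Rightarrow> complex \<Rightarrow> complex" where
  "mpow \<alpha> z = exp (of_real \<alpha> * (\<i> * of_real pi - Ln z))"

lemma minus_inverse_eq_exp:
  assumes "z \<noteq> 0"
  shows "- 1 / z = exp (\<i> * of_real pi - Ln z)"
  using assms by (simp add: exp_diff)

lemma pow1_minus_inverse:
  assumes "Im z > 0"
  shows "pow1 (- 1 / z) \<alpha> = mpow \<alpha> z"
proof -
  have "0 < Im (Ln z)" "Im (Ln z) < pi" using Im_Ln_pos_lt_imp[OF assms] by auto
  then have "0 \<le> Im (\<i> * of_real pi - Ln z)" "Im (\<i> * of_real pi - Ln z) < 2 * pi" by auto
  moreover have "- 1 / z = exp (\<i> * of_real pi - Ln z)"
    using assms by (intro minus_inverse_eq_exp) auto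
  ultimately show ?thesis by (simp add: pow1_exp mpow_def)
qed

lemma norm_mpow:
  assumes "z \<noteq> 0"
  shows "norm (mpow \<alpha> z) = norm z powr (- \<alpha>)"
  using assms by (simp add: mpow_def powr_def)

lemma mpow_mult_exp:
  assumes "Ln (z * exp d) = Ln z + d"
  shows "mpow \<alpha> (z * exp d) = mpow \<alpha> z * exp (- of_real \<alpha> * d)"
  unfolding mpow_def assms exp_add[symmetric] by (simp add: algebra_simps)

(* Taking the power 1/alpha undoes mpow: (c (-1/z)^alpha)^(1/alpha) = c^(1/alpha) (-1/z)
   for c > 0, because alpha (pi - arg z) stays in (0, 2 pi) for alpha <= 2. *)
lemma pow1_scaled_mpow:
  assumes "0 < \<alpha>" "\<alpha> \<le> 2" "Im z > 0" "c > 0"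
  shows "pow1 (of_real c * mpow \<alpha> z) (1 / \<alpha>) = of_real (c powr (1 / \<alpha>)) * (- 1 / z)"
proof -
  define L where "L = of_real (ln c) + of_real \<alpha> * (\<i> * of_real pi - Ln z)"
  have "of_real c = exp (of_real (ln c))" using assms(4) by (simp add: exp_of_real)
  then have L: "of_real c * mpow \<alpha> z = exp L" by (simp add: L_def mpow_def exp_add)
  have "0 < Im (Ln z)" "Im (Ln z) < pi" using Im_Ln_pos_lt_imp[OF assms(3)] by auto
  then have "0 < \<alpha> * (pi - Im (Ln z))" "\<alpha> * (pi - Im (Ln z)) \<le> 2 * (pi - Im (Ln z))"
    using assms by (simp, intro mult_right_mono, simp_all)
  then have "0 \<le> Im L" "Im L < 2 * pi"
    using \<open>0 < Im (Ln z)\<close> by (auto simp: L_def)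
  then have "pow1 (of_real c * mpow \<alpha> z) (1 / \<alpha>) = exp (of_real (ln c / \<alpha>) + (\<i> * of_real pi - Ln z))"
    using assms(1) by (simp add: L pow1_exp L_def field_simps)
  also have "\<dots> = of_real (c powr (1 / \<alpha>)) * exp (\<i> * of_real pi - Ln z)"
    using assms(4) by (simp add: exp_add powr_def flip: exp_of_real of_real_divide)
  also have "\<dots> = of_real (c powr (1 / \<alpha>)) * (- 1 / z)"
    using assms(3) by (subst minus_inverse_eq_exp) auto
  finally show ?thesis .
qed

definition gasr_base :: "real \<Rightarrow> complex \<Rightarrow> complex \<Rightarrow> complex" where
  "gasr_base \<alpha> s w = (1 - ppow (1 - s * mpow \<alpha> w) (1 / 2)) / s"

lemma Gasr_two:
  assumes "Im w > 0"
  shows "Gasr \<alpha> s 2 w = - of_real (2 powr (1 / \<alpha>)) * pow1 (gasr_base \<alpha> s w) (1 / \<alpha>)"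
  unfolding Gasr_def gasr_base_def pow1_minus_inverse[OF assms] by simp

(* The algebraic heart: if (-1/w)^alpha = q (1 - s q / 4) with q = (-1/z)^alpha, then
   1 - s (-1/w)^alpha = (1 - s q / 2)^2 and G^alpha_{s,2}(w) = 1/z. *)
lemma Gasr_two_at_inverse:
  assumes a: "0 < \<alpha>" "\<alpha> \<le> 2" and s: "s \<noteq> 0" and z: "Im z > 0" and w: "Im w > 0"
    and small: "norm (s * mpow \<alpha> z) < 2"
    and rel: "mpow \<alpha> w = mpow \<alpha> z * (1 - s * mpow \<alpha> z / 4)"
  shows "Gasr \<alpha> s 2 w = 1 / z"
proof -
  define q where "q = mpow \<alpha> z"
  have "1 - s * mpow \<alpha> w = (1 - s * q / 2) ^ 2"
    by (simp add: rel q_def power2_eq_square field_simps)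
  moreover have "Re (1 - s * q / 2) > 0"
    using abs_Re_le_cmod[of "s * q"] small by (simp add: q_def)
  ultimately have base: "gasr_base \<alpha> s w = of_real (1 / 2) * mpow \<alpha> z"
    using s by (simp add: gasr_base_def ppow_half_square q_def)
  have "pow1 (gasr_base \<alpha> s w) (1 / \<alpha>) = of_real ((1 / 2) powr (1 / \<alpha>)) * (- 1 / z)"
    unfolding base by (rule pow1_scaled_mpow[OF a z]) simp
  then have "Gasr \<alpha> s 2 w = - of_real (2 powr (1 / \<alpha>)) * (of_real ((1 / 2) powr (1 / \<alpha>)) * (- 1 / z))"
    using w by (simp add: Gasr_two)
  also have "\<dots> = 1 / z"
    by (simp add: powr_divide flip: of_real_mult)
  finally show ?thesis .
qed

lemma Fstable_eq:
  assumes a: "0 < \<alpha>" "\<alpha> \<le> 2" and z: "Im z > \<bar>Re z\<bar>"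
    and small: "norm (s * mpow \<alpha> z) \<le> \<alpha> / 80"
  shows "Fstable \<alpha> (s / 4) z = z * exp (Ln (1 - s * mpow \<alpha> z / 4) / of_real \<alpha>)"
proof -
  define e where "e = - (s * mpow \<alpha> z / 4)"
  have z0: "z \<noteq> 0" and "Im z \<ge> 0" using z by auto
  have pz: "pow1 z \<alpha> = exp (of_real \<alpha> * Ln z)"
    using \<open>Im z \<ge> 0\<close> by (simp add: pow1_def log1_def)
  have "exp (of_real \<alpha> * Ln z) * mpow \<alpha> z = exp (\<i> * of_real (\<alpha> * pi))"
    unfolding mpow_def exp_add[symmetric] by (simp add: algebra_simps)
  moreover have "exp (\<i> * of_real ((\<alpha> - 1) * pi)) = - exp (\<i> * of_real (\<alpha> * pi))"
    by (simp add: algebra_simps exp_diff)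
  ultimately have "pow1 z \<alpha> + exp (\<i> * of_real ((\<alpha> - 1) * pi)) * (s / 4)
                   = exp (of_real \<alpha> * Ln z) * (1 + e)"
    by (simp add: pz e_def algebra_simps)
  moreover have "norm e = norm (s * mpow \<alpha> z) / 4" by (simp add: e_def norm_divide)
  then have "norm e \<le> \<alpha> / 80" using small norm_ge_zero[of "s * mpow \<alpha> z"] by linarith
  then have "log1 (exp (of_real \<alpha> * Ln z) * (1 + e)) = of_real \<alpha> * Ln z + Ln (1 + e)"
    using Im_Ln_quarter_cone[OF z] a by (intro log1_exp_mult_sector) auto
  ultimately have "Fstable \<alpha> (s / 4) z = exp (of_real (1 / \<alpha>) * (of_real \<alpha> * Ln z + Ln (1 + e)))"
    by (simp add: Fstable_def pow1_def)
  also have "of_real (1 / \<alpha>) * (of_real \<alpha> * Ln z + Ln (1 + e)) = Ln z + Ln (1 + e) / of_real \<alpha>"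
    using a by (simp add: field_simps)
  also have "exp (Ln z + Ln (1 + e) / of_real \<alpha>) = z * exp (Ln (1 + e) / of_real \<alpha>)"
    using z0 by (simp add: exp_add)
  finally show ?thesis by (simp add: e_def)
qed

lemma cone_perturb:
  assumes z: "Im z > 3 * \<bar>Re z\<bar>" and \<rho>: "norm \<rho> \<le> 3 / 320"
  shows "Im (z * (1 + \<rho>)) \<ge> 79 / 80 * Im z" "Im (z * (1 + \<rho>)) > \<bar>Re (z * (1 + \<rho>))\<bar>"
proof -
  have "norm z \<le> 4 / 3 * Im z" using cmod_le[of z] z by simp
  then have "norm (z * \<rho>) \<le> (4 / 3 * Im z) * (3 / 320)"
    unfolding norm_mult using \<rho> z by (intro mult_mono) auto
  then have "\<bar>Im (z * \<rho>)\<bar> \<le> Im z / 80" "\<bar>Re (z * \<rho>)\<bar> \<le> Im z / 80"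
    using abs_Im_le_cmod[of "z * \<rho>"] abs_Re_le_cmod[of "z * \<rho>"] by linarith+
  then show "Im (z * (1 + \<rho>)) \<ge> 79 / 80 * Im z" "Im (z * (1 + \<rho>)) > \<bar>Re (z * (1 + \<rho>))\<bar>"
    using z by (simp_all add: distrib_left del: times_complex.sel)
qed

lemma forward_point:
  assumes a: "0 < \<alpha>" "\<alpha> \<le> 2" and s: "s \<noteq> 0" and z: "Im z > 3 * \<bar>Re z\<bar>"
    and small: "norm (s * mpow \<alpha> z) \<le> \<alpha> / 80"
  defines "w \<equiv> z ^ 2 / Fstable \<alpha> (s / 4) z"
  shows "Im w > \<bar>Re w\<bar>" "Im w \<ge> 79 / 80 * Im z" "Gasr \<alpha> s 2 w = 1 / z"
proof -
  define q where "q = mpow \<alpha> z"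
  define \<delta> where "\<delta> = Ln (1 - s * q / 4) / of_real \<alpha>"
  have zq: "Im z > \<bar>Re z\<bar>" "z \<noteq> 0" using z by auto
  have "norm (- (s * q / 4)) < 1 / 2" using small a by (simp add: q_def)
  then have exp_D: "exp (of_real \<alpha> * \<delta>) = 1 - s * q / 4"
    and D: "norm (of_real \<alpha> * \<delta>) \<le> 2 * norm (s * q / 4)"
    using exp_Ln_one_plus[of "- (s * q / 4)"] norm_Ln_le[of "- (s * q / 4)"] a
    by (auto simp: \<delta>_def)
  have "norm (of_real \<alpha> * \<delta>) = \<alpha> * norm \<delta>" "norm (s * q / 4) = norm (s * q) / 4"
    using a by (simp_all add: norm_mult norm_divide)
  then have "\<alpha> * norm \<delta> \<le> \<alpha> * (1 / 160)"
    using D small unfolding q_def by linarith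
  then have \<delta>: "norm \<delta> \<le> 1 / 160" using a by simp
  have "Fstable \<alpha> (s / 4) z = z * exp \<delta>"
    using Fstable_eq[OF a zq(1) small] by (simp add: \<delta>_def q_def)
  then have w: "w = z * exp (- \<delta>)"
    using zq by (simp add: w_def power2_eq_square exp_minus field_simps)
  have "norm (exp (- \<delta>) - 1) \<le> 3 / 2 * norm (- \<delta>)"
    using \<delta> by (intro norm_exp_bounds(2)) auto
  then have "norm (exp (- \<delta>) - 1) \<le> 3 / 320" using \<delta> by simp
  from cone_perturb[OF z this]
  show "Im w > \<bar>Re w\<bar>" "Im w \<ge> 79 / 80 * Im z" by (simp_all add: w)
  then have "Im w > 0" by linarith
  have "\<bar>Im \<delta>\<bar> \<le> 1 / 160" using abs_Im_le_cmod[of \<delta>] \<delta> by linarith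
  then have "Ln w = Ln z + - \<delta>"
    unfolding w using Im_Ln_quarter_cone[OF zq(1)] zq pi_gt3 by (intro Ln_mult_exp) auto
  then have "mpow \<alpha> w = q * (1 - s * q / 4)"
    unfolding w using mpow_mult_exp by (simp add: q_def exp_D)
  moreover have "norm (s * q) < 2" using small a by (simp add: q_def)
  ultimately show "Gasr \<alpha> s 2 w = 1 / z"
    using Gasr_two_at_inverse[OF a s] zq \<open>Im w > 0\<close> z by (auto simp: q_def)
qed

lemma gasr_base_log1:
  assumes a: "0 < \<alpha>" "\<alpha> \<le> 2" and s: "s \<noteq> 0" and w: "Im w > \<bar>Re w\<bar>"
    and small: "norm (s * mpow \<alpha> w) \<le> \<alpha> / 80"
  shows "exp (log1 (gasr_base \<alpha> s w)) = gasr_base \<alpha> s w"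
    and "\<bar>Im (log1 (gasr_base \<alpha> s w)) / \<alpha> - (pi - Im (Ln w))\<bar> \<le> 1 / 40"
proof -
  define u where "u = mpow \<alpha> w"
  define R where "R = ppow (1 - s * u) (1 / 2)"
  define e where "e = (1 - R) / (1 + R)"
  define L where "L = of_real \<alpha> * (\<i> * of_real pi - Ln w) - of_real (ln 2)"
  have "1 - s * u \<noteq> 0" using small a by (auto simp: u_def)
  then have R2: "(1 - R) * (1 + R) = s * u" and "Re R \<ge> 0"
    using ppow_half[of "1 - s * u"] by (simp_all add: R_def algebra_simps power2_eq_square)
  then have R1: "norm (1 + R) \<ge> 1" using complex_Re_le_cmod[of "1 + R"] by simp
  then have "norm e \<le> norm (1 - R)"
    by (simp add: e_def norm_divide divide_le_eq mult_le_cancel_left1)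
  also have "norm (1 - R) \<le> norm (1 - R) * norm (1 + R)"
    using R1 by (simp add: mult_le_cancel_left1)
  also have "\<dots> = norm (s * u)" by (simp flip: R2 norm_mult)
  finally have e: "norm e \<le> \<alpha> / 80" using small by (simp add: u_def)
  have "1 + R \<noteq> 0" using R1 by auto
  moreover have "exp L = u / 2"
    by (simp add: L_def u_def mpow_def exp_diff exp_of_real)
  ultimately have A: "gasr_base \<alpha> s w = exp L * (1 + e)"
    using s R2 unfolding gasr_base_def u_def[symmetric] R_def[symmetric] e_def
    by (simp add: field_simps)
  have "Im L = \<alpha> * (pi - Im (Ln w))" by (simp add: L_def)
  then have log: "log1 (gasr_base \<alpha> s w) = L + Ln (1 + e)"
    unfolding A using Im_Ln_quarter_cone[OF w] a e by (intro log1_exp_mult_sector) auto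
  have "norm e < 1 / 2" using e a by simp
  then show "exp (log1 (gasr_base \<alpha> s w)) = gasr_base \<alpha> s w"
    unfolding log by (simp add: A exp_add exp_Ln_one_plus)
  have "\<bar>Im (Ln (1 + e))\<bar> \<le> \<alpha> / 40"
    using abs_Im_le_cmod[of "Ln (1 + e)"] norm_Ln_le[OF \<open>norm e < 1 / 2\<close>] e by linarith
  then have "\<bar>Im (Ln (1 + e)) / \<alpha>\<bar> \<le> 1 / 40" using a by (simp add: abs_divide field_simps)
  moreover have "Im (log1 (gasr_base \<alpha> s w)) / \<alpha> = (pi - Im (Ln w)) + Im (Ln (1 + e)) / \<alpha>"
    using a by (simp add: log \<open>Im L = _\<close> field_simps)
  ultimately show "\<bar>Im (log1 (gasr_base \<alpha> s w)) / \<alpha> - (pi - Im (Ln w))\<bar> \<le> 1 / 40" by simp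
qed

lemma mpow_eq_gasr_base:
  assumes s: "s \<noteq> 0" and small: "norm (s * mpow \<alpha> w) < 1"
  shows "mpow \<alpha> w = gasr_base \<alpha> s w * (2 - s * gasr_base \<alpha> s w)"
proof -
  define R where "R = ppow (1 - s * mpow \<alpha> w) (1 / 2)"
  have "1 - s * mpow \<alpha> w \<noteq> 0" using small by auto
  then have R2: "R ^ 2 = 1 - s * mpow \<alpha> w" using ppow_half by (simp add: R_def)
  have "gasr_base \<alpha> s w * (2 - s * gasr_base \<alpha> s w) = (1 - R ^ 2) / s"
    using s by (simp add: gasr_base_def R_def[symmetric] power2_eq_square field_simps)
  then show ?thesis using s by (simp add: R2)
qed

(* Equal values give
   equal gasr_base (the 1/alpha powers are compared through the narrow argument window), hence
   equal (-1/w)^alpha, hence equal arguments and moduli. *)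
lemma Gasr_two_inj_on:
  assumes a: "0 < \<alpha>" "\<alpha> \<le> 2" and s: "s \<noteq> 0"
  shows "inj_on (Gasr \<alpha> s 2) {w. Im w > \<bar>Re w\<bar> \<and> norm (s * mpow \<alpha> w) \<le> \<alpha> / 80}"
proof (rule inj_onI)
  fix w1 w2
  assume "w1 \<in> {w. Im w > \<bar>Re w\<bar> \<and> norm (s * mpow \<alpha> w) \<le> \<alpha> / 80}"
    and "w2 \<in> {w. Im w > \<bar>Re w\<bar> \<and> norm (s * mpow \<alpha> w) \<le> \<alpha> / 80}"
    and eq: "Gasr \<alpha> s 2 w1 = Gasr \<alpha> s 2 w2"
  then have w1: "Im w1 > \<bar>Re w1\<bar>" "norm (s * mpow \<alpha> w1) \<le> \<alpha> / 80"
    and w2: "Im w2 > \<bar>Re w2\<bar>" "norm (s * mpow \<alpha> w2) \<le> \<alpha> / 80" by auto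
  define A1 A2 where "A1 = gasr_base \<alpha> s w1" and "A2 = gasr_base \<alpha> s w2"
  note log1 = gasr_base_log1[OF a s w1] and log2 = gasr_base_log1[OF a s w2]
  have "pow1 A1 (1 / \<alpha>) = pow1 A2 (1 / \<alpha>)"
    using eq w1 w2 by (simp add: A1_def A2_def Gasr_two)
  then have "exp (of_real (1 / \<alpha>) * log1 A1) = exp (of_real (1 / \<alpha>) * log1 A2)"
    by (simp add: pow1_def)
  moreover have "Im (log1 A1) / \<alpha> - Im (log1 A2) / \<alpha> < 2 * pi"
    and "Im (log1 A2) / \<alpha> - Im (log1 A1) / \<alpha> < 2 * pi"
    using log1(2) log2(2) Im_Ln_quarter_cone[OF w1(1)] Im_Ln_quarter_cone[OF w2(1)] pi_gt3
    unfolding A1_def A2_def abs_le_iff by linarith+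
  then have "\<bar>Im (of_real (1 / \<alpha>) * log1 A1) - Im (of_real (1 / \<alpha>) * log1 A2)\<bar> < 2 * pi"
    by (simp add: abs_less_iff)
  ultimately have "of_real (1 / \<alpha>) * log1 A1 = of_real (1 / \<alpha>) * log1 A2"
    by (rule exp_eq_imp_eq)
  then have "log1 A1 = log1 A2" using a by simp
  then have "A1 = A2" using log1(1) log2(1) by (metis A1_def A2_def)
  moreover have "norm (s * mpow \<alpha> w1) < 1" "norm (s * mpow \<alpha> w2) < 1"
    using w1(2) w2(2) a by linarith+
  ultimately have "mpow \<alpha> w1 = mpow \<alpha> w2"
    using mpow_eq_gasr_base[OF s] by (metis A1_def A2_def)
  then have exp_eq: "exp (of_real \<alpha> * (\<i> * of_real pi - Ln w1)) = exp (of_real \<alpha> * (\<i> * of_real pi - Ln w2))"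
    by (simp only: mpow_def)
  have "\<bar>Im (Ln w2) - Im (Ln w1)\<bar> \<le> pi / 2"
    using Im_Ln_quarter_cone[OF w1(1)] Im_Ln_quarter_cone[OF w2(1)] unfolding abs_le_iff by linarith
  then have "\<bar>\<alpha> * (Im (Ln w2) - Im (Ln w1))\<bar> \<le> 2 * (pi / 2)"
    unfolding abs_mult using a by (intro mult_mono) auto
  moreover have "Im (of_real \<alpha> * (\<i> * of_real pi - Ln w1)) - Im (of_real \<alpha> * (\<i> * of_real pi - Ln w2))
                 = \<alpha> * (Im (Ln w2) - Im (Ln w1))"
    by (simp add: algebra_simps)
  ultimately have "\<bar>Im (of_real \<alpha> * (\<i> * of_real pi - Ln w1)) - Im (of_real \<alpha> * (\<i> * of_real pi - Ln w2))\<bar> < 2 * pi"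
    using pi_gt3 by simp
  with exp_eq have "of_real \<alpha> * (\<i> * of_real pi - Ln w1) = of_real \<alpha> * (\<i> * of_real pi - Ln w2)"
    by (rule exp_eq_imp_eq)
  then have "Ln w1 = Ln w2" using a by simp
  moreover have "w1 \<noteq> 0" "w2 \<noteq> 0" using w1(1) w2(1) by auto
  ultimately show "w1 = w2" by (metis exp_Ln)
qed

lemma mpow_small_far_out:
  assumes "0 < \<alpha>"
  obtains R where "R > 0" "\<And>w. norm w > R \<Longrightarrow> norm (s * mpow \<alpha> w) \<le> \<alpha> / 80"
proof -
  have "((\<lambda>x. norm s * x powr (- \<alpha>)) \<longlongrightarrow> norm s * 0) at_top"
    using assms by (intro tendsto_mult tendsto_const tendsto_neg_powr filterlim_ident) auto
  then have "eventually (\<lambda>x. norm s * x powr (- \<alpha>) < \<alpha> / 80) at_top"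
    using assms by (intro order_tendstoD(2)) auto
  then obtain N where N: "\<And>x. x \<ge> N \<Longrightarrow> norm s * x powr (- \<alpha>) < \<alpha> / 80"
    by (auto simp: eventually_at_top_linorder)
  show thesis
  proof (rule that[of "max N 1"])
    fix w :: complex
    assume "norm w > max N 1"
    then have "w \<noteq> 0" "norm w \<ge> N" by auto
    then show "norm (s * mpow \<alpha> w) \<le> \<alpha> / 80"
      using N by (simp add: norm_mult norm_mpow less_imp_le)
  qed simp
qed

theorem theorem4p1:
  fixes \<alpha> :: real and s :: complex and \<mu> a :: "real measure"
  assumes adm: "admissible \<alpha> s"
    and mu_prob: "prob_space \<mu>" and mu_sets: "sets \<mu> = sets borel"
    and mu_G: "\<And>z. Im z > 0 \<Longrightarrow> cauchy \<mu> z = Gasr \<alpha> s 2 z"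
    and a_prob: "prob_space a" and a_sets: "sets a = sets borel"
    and a_F: "\<And>z. Im z > 0 \<Longrightarrow> Ftr a z = Fstable \<alpha> (s / 4) z"
  shows "\<exists>\<eta> M \<eta>' M'. \<eta> > 0 \<and> M > 0 \<and> \<eta>' > 0 \<and> M' > 0 \<and>
           inj_on (Ftr \<mu>) (cone \<eta>' M') \<and>
           (\<forall>z \<in> cone \<eta> M. z\<^sup>2 * cauchy a z \<in> cone \<eta>' M' \<and>
                             Ftr \<mu> (z\<^sup>2 * cauchy a z) = z)"
proof -
  have s: "s \<noteq> 0" and a: "0 < \<alpha>" "\<alpha> \<le> 2" using adm by (auto simp: admissible_def)
  obtain R where R: "R > 0" "\<And>w. norm w > R \<Longrightarrow> norm (s * mpow \<alpha> w) \<le> \<alpha> / 80"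
    using mpow_small_far_out[OF a(1)] by blast
  have far: "norm (s * mpow \<alpha> w) \<le> \<alpha> / 80" if "Im w > R" for w :: complex
    by (intro R(2)) (use that abs_Im_le_cmod[of w] in linarith)
  have Ftr_mu: "Ftr \<mu> w = 1 / Gasr \<alpha> s 2 w" if "Im w > R" for w :: complex
    using that R(1) mu_G[of w] by (simp add: Ftr_def)
  have inj: "inj_on (Ftr \<mu>) (cone 1 R)"
  proof (rule inj_onI)
    fix w1 w2 assume "w1 \<in> cone 1 R" "w2 \<in> cone 1 R" and eq: "Ftr \<mu> w1 = Ftr \<mu> w2"
    then have w1: "Im w1 > \<bar>Re w1\<bar>" "Im w1 > R" and w2: "Im w2 > \<bar>Re w2\<bar>" "Im w2 > R"
      by (auto simp: cone_def)
    have "Gasr \<alpha> s 2 w1 = Gasr \<alpha> s 2 w2"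
      using eq by (simp add: Ftr_mu w1 w2)
    moreover have "w1 \<in> {w. Im w > \<bar>Re w\<bar> \<and> norm (s * mpow \<alpha> w) \<le> \<alpha> / 80}"
      and "w2 \<in> {w. Im w > \<bar>Re w\<bar> \<and> norm (s * mpow \<alpha> w) \<le> \<alpha> / 80}"
      using w1 w2 far[OF w1(2)] far[OF w2(2)] by simp_all
    ultimately show "w1 = w2" by (rule inj_onD[OF Gasr_two_inj_on[OF a s]])
  qed
  have "z\<^sup>2 * cauchy a z \<in> cone 1 R \<and> Ftr \<mu> (z\<^sup>2 * cauchy a z) = z" if "z \<in> cone 3 (2 * R)" for z
  proof -
    have z: "Im z > 3 * \<bar>Re z\<bar>" "Im z > 2 * R" using that by (auto simp: cone_def)
    then have "Im z > R" using R(1) by linarith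
    define w where "w = z\<^sup>2 / Fstable \<alpha> (s / 4) z"
    have "1 / cauchy a z = Fstable \<alpha> (s / 4) z"
      using a_F[of z] z R(1) by (simp add: Ftr_def)
    then have "z\<^sup>2 * cauchy a z = w"
      unfolding w_def by (metis divide_inverse inverse_eq_divide inverse_inverse_eq)
    moreover have "Im w > \<bar>Re w\<bar>" "Im w \<ge> 79 / 80 * Im z" "Gasr \<alpha> s 2 w = 1 / z"
      using forward_point[OF a s z(1) far[OF \<open>Im z > R\<close>]] by (simp_all add: w_def)
    moreover from this have "Im w > R" using z R(1) by linarith
    ultimately show ?thesis by (simp add: cone_def Ftr_mu)
  qed
  then show ?thesis
    using R(1) inj by (intro exI[of _ 3] exI[of _ "2 * R"] exI[of _ 1] exI[of _ R]) auto
qed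

end
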